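(* Let $f\colon X\to X$ be a homeomorphism of a metric space $X$ and let $k\in\mathbb{Z}$. Every Borel probability measure that is inner-distal with respect to $f$ is also inner-distal with respect to $f^k$. In particular, if $f$ is inner-distal, then $f^k$ is inner-distal.
   Context: For a homeomorphism $g$ of $(X,d)$, $\mathcal{P}_g(x)=\{y\colon \inf_{n\in\mathbb{Z}} d(g^n(x),g^n(y))=0\}$. $g$ is inner-distal if $\operatorname{Int}\mathcal{P}_g(x)=\emptyset$ for all $x$; a Borel probability measure $\mu$ is inner-distal w.r.t. $g$ if $\mu(\operatorname{Int}\mathcal{P}_g(x))=0$ for all $x$. *)

theory Defs
  imports "HOL-Probability.Probability"
begin

definition zpow :: "('a \<Rightarrow> 'a) \<Rightarrow> int \<Rightarrow> 'a \<Rightarrow> 'a" where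
  "zpow g n = (if 0 \<le> n then g ^^ nat n else (inv g) ^^ nat (- n))"

definition proximal_cell :: "('a::metric_space \<Rightarrow> 'a) \<Rightarrow> 'a \<Rightarrow> 'a set" where
  "proximal_cell g x = {y. (INF n::int. dist (zpow g n x) (zpow g n y)) = 0}"

definition inner_distal :: "('a::metric_space \<Rightarrow> 'a) \<Rightarrow> bool" where
  "inner_distal g \<longleftrightarrow> (\<forall>x. interior (proximal_cell g x) = {})"

definition inner_distal_measure :: "'a::metric_space measure \<Rightarrow> ('a \<Rightarrow> 'a) \<Rightarrow> bool" where
  "inner_distal_measure \<mu> g \<longleftrightarrow> (\<forall>x. measure \<mu> (interior (proximal_cell g x)) = 0)"

end

theory Submission
  imports Defs
begin

text \<open>Along the subsequence of times \<open>k n\<close> the orbit distances of \<open>x\<close> and \<open>y\<close> can only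
  have a larger infimum, so the proximal cell of \<open>x\<close> for \<open>f^k\<close> lies inside the one for \<open>f\<close>.
  Interiors and measures are monotone, so the smaller cell inherits null (or empty) interior.\<close>

lemma zpow_0 [simp]: "zpow h 0 = id"
  by (simp add: zpow_def)

lemma zpow_add_1:
  assumes "bij h"
  shows "zpow h (n + 1) = h \<circ> zpow h n"
proof (cases "n \<ge> 0")
  case True
  then have "nat (n + 1) = Suc (nat n)" by simp
  with True show ?thesis by (simp add: zpow_def)
next
  case False
  then have "nat (- n) = Suc (nat (- (n + 1)))" by simp
  with False have "zpow h n = inv h \<circ> zpow h (n + 1)"
    by (simp add: zpow_def funpow_Suc_right[symmetric] funpow.simps(2))
  moreover have "h \<circ> inv h = id"
    using assms bij_is_surj surj_iff by blast
  ultimately show ?thesis by (simp flip: comp_assoc)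
qed

lemma zpow_diff_1:
  assumes "bij h"
  shows "zpow h (n - 1) = inv h \<circ> zpow h n"
proof -
  have "inv h \<circ> h = id"
    using assms bij_is_inj inj_iff by blast
  then show ?thesis
    using zpow_add_1[OF assms, of "n - 1"] by (simp add: comp_assoc[symmetric])
qed

lemma zpow_add:
  assumes "bij h"
  shows "zpow h (a + b) = zpow h a \<circ> zpow h b"
proof (induction a rule: int_induct[where k = 0])
  case base
  then show ?case by simp
next
  case (step1 i)
  then show ?case
    using zpow_add_1[OF assms, of "i + b"] zpow_add_1[OF assms, of i] by (simp add: ac_simps)
next
  case (step2 i)
  then show ?case
    using zpow_diff_1[OF assms, of "i + b"] zpow_diff_1[OF assms, of i] by (simp add: algebra_simps)
qed

lemma inv_zpow:
  assumes "bij h"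
  shows "inv (zpow h k) = zpow h (- k)" and "bij (zpow h k)"
proof -
  have "zpow h k \<circ> zpow h (- k) = id" "zpow h (- k) \<circ> zpow h k = id"
    using zpow_add[OF assms, of k "- k"] zpow_add[OF assms, of "- k" k] by simp_all
  then show "inv (zpow h k) = zpow h (- k)" and "bij (zpow h k)"
    by (auto intro: inv_unique_comp o_bij)
qed

lemma zpow_mult:
  assumes "bij h"
  shows "zpow (zpow h k) n = zpow h (k * n)"
proof (induction n rule: int_induct[where k = 0])
  case base
  then show ?case by simp
next
  case (step1 i)
  have "zpow (zpow h k) (i + 1) = zpow h k \<circ> zpow h (k * i)"
    using step1 zpow_add_1[OF inv_zpow(2)[OF assms]] by simp
  also have "\<dots> = zpow h (k * (i + 1))"
    using zpow_add[OF assms, of k "k * i"] by (simp add: algebra_simps)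
  finally show ?case .
next
  case (step2 i)
  have "zpow (zpow h k) (i - 1) = zpow h (- k) \<circ> zpow h (k * i)"
    using step2 zpow_diff_1[OF inv_zpow(2)[OF assms]] inv_zpow(1)[OF assms] by simp
  also have "\<dots> = zpow h (k * (i - 1))"
    using zpow_add[OF assms, of "- k" "k * i"] by (simp add: algebra_simps)
  finally show ?case .
qed

lemma proximal_cell_zpow_subset:
  fixes f :: "'a::metric_space \<Rightarrow> 'a"
  assumes "bij f"
  shows "proximal_cell (zpow f k) x \<subseteq> proximal_cell f x"
proof
  fix y
  let ?d = "\<lambda>n::int. dist (zpow f n x) (zpow f n y)"
  assume "y \<in> proximal_cell (zpow f k) x"
  then have "(INF n. ?d (k * n)) = 0"
    by (simp add: proximal_cell_def zpow_mult[OF assms])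
  moreover have "(INF n. ?d n) \<le> (INF n. ?d (k * n))"
    by (rule cINF_mono) (auto intro: bdd_belowI[of _ 0])
  moreover have "0 \<le> (INF n. ?d n)"
    by (rule cINF_greatest) auto
  ultimately show "y \<in> proximal_cell f x"
    by (simp add: proximal_cell_def)
qed

lemma inner_distal_measure_mono:
  assumes "finite_measure \<mu>" and "sets \<mu> = sets borel" and "inner_distal_measure \<mu> f"
    and "\<And>x. proximal_cell g x \<subseteq> proximal_cell f x"
  shows "inner_distal_measure \<mu> g"
  unfolding inner_distal_measure_def
proof
  fix x
  have "measure \<mu> (interior (proximal_cell g x)) \<le> measure \<mu> (interior (proximal_cell f x))"
    using assms(1,2,4) by (intro finite_measure.finite_measure_mono interior_mono) auto
  also have "\<dots> = 0"
    using assms(3) by (simp add: inner_distal_measure_def)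
  finally show "measure \<mu> (interior (proximal_cell g x)) = 0"
    by (simp add: antisym)
qed

lemma inner_distal_mono:
  assumes "inner_distal f" and "\<And>x. proximal_cell g x \<subseteq> proximal_cell f x"
  shows "inner_distal g"
  using assms interior_mono unfolding inner_distal_def by blast

theorem lemma3p4:
  fixes f :: "'a::metric_space \<Rightarrow> 'a" and k :: int
  assumes "\<exists>g. homeomorphism UNIV UNIV f g"
  shows "(\<forall>\<mu>::'a measure. prob_space \<mu> \<and> sets \<mu> = sets borel \<and> inner_distal_measure \<mu> f
            \<longrightarrow> inner_distal_measure \<mu> (zpow f k))
         \<and> (inner_distal f \<longrightarrow> inner_distal (zpow f k))"
proof -
  obtain g where "homeomorphism UNIV UNIV f g" using assms by blast
  then have "g \<circ> f = id" and "f \<circ> g = id"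
    by (auto simp: homeomorphism_def fun_eq_iff)
  then have "bij f" by (rule o_bij)
  then have "proximal_cell (zpow f k) x \<subseteq> proximal_cell f x" for x
    by (rule proximal_cell_zpow_subset)
  then show ?thesis
    by (auto intro: inner_distal_measure_mono inner_distal_mono prob_space.finite_measure)
qed

end
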